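(* Let $F_i\colon \mathbb{R}^n \rightrightarrows \mathbb{R}^m$, $i=1,\ldots,p$, be nearly convex set-valued mappings and let $F=\bigcap_{i=1}^p F_i$, i.e. $F(x)=\bigcap_{i=1}^pF_i(x)$. Assume $$\bigcap_{i=1}^p \mathrm{ri}(\mathrm{gph}\, F_i)\neq\emptyset.$$ Then for any $\varepsilon \ge 0$, any $(\bar x, \bar y)\in \mathrm{gph}\, F$ and any $v\in\mathbb{R}^m$, $$D^*_\varepsilon F (\bar x, \bar y) (v)= \bigcup_{\substack{\varepsilon_1\geq 0,\ldots, \varepsilon_p\geq 0,\\ \varepsilon_1+\cdots+\varepsilon_p=\varepsilon}} \Big\{D^*_{\varepsilon_1} F_1 (\bar x, \bar y)(v_1)+\cdots+ D^*_{\varepsilon_p} F_p (\bar x, \bar y)(v_p) \;\Big|\; v_1+\cdots+v_p =v\Big\}.$$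
   Context: A set $D$ is nearly convex if there is a convex $E$ with $E\subset D\subset\overline{E}$. A set-valued mapping is nearly convex if its graph $\mathrm{gph}\,F=\{(x,y)\mid y\in F(x)\}$ is nearly convex. $\mathrm{ri}\,D=\{a\in D\mid\exists\delta>0,\ B(a;\delta)\cap\mathrm{aff}\,D\subset D\}$. For nonempty $\Omega$, $\bar z\in\Omega$, $\varepsilon\ge0$: $N_\varepsilon(\bar z;\Omega)=\{\xi\mid\langle\xi,z-\bar z\rangle\le\varepsilon\ \forall z\in\Omega\}$. The $\varepsilon$-coderivative at $(\bar x,\bar y)\in\mathrm{gph}\,F$ is $D^*_\varepsilon F(\bar x,\bar y)(v)=\{u\in\mathbb{R}^n\mid(u,-v)\in N_\varepsilon((\bar x,\bar y);\mathrm{gph}\,F)\}$. The union over the $v_i$ ranges over all $v_1,\dots,v_p\in\mathbb{R}^m$ summing to $v$; sums of sets are Minkowski sums. *)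

theory Defs
  imports "HOL-Analysis.Analysis"
begin

definition nearly_convex :: "'a::real_normed_vector set \<Rightarrow> bool" where
  "nearly_convex D \<longleftrightarrow> (\<exists>E. convex E \<and> E \<subseteq> D \<and> D \<subseteq> closure E)"

definition gph :: "('a \<Rightarrow> 'b set) \<Rightarrow> ('a \<times> 'b) set" where
  "gph F = {(x, y). y \<in> F x}"

definition nearly_convex_map :: "('a::real_normed_vector \<Rightarrow> 'b::real_normed_vector set) \<Rightarrow> bool" where
  "nearly_convex_map F \<longleftrightarrow> nearly_convex (gph F)"

definition ri :: "'a::real_normed_vector set \<Rightarrow> 'a set" where
  "ri D = {a \<in> D. \<exists>\<delta>>0. ball a \<delta> \<inter> affine hull D \<subseteq> D}"

definition eps_normal :: "real \<Rightarrow> 'a::real_inner \<Rightarrow> 'a set \<Rightarrow> 'a set" where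
  "eps_normal \<epsilon> zb \<Omega> = {\<xi>. \<forall>z\<in>\<Omega>. inner \<xi> (z - zb) \<le> \<epsilon>}"

definition eps_coderiv ::
  "real \<Rightarrow> ('a::real_inner \<Rightarrow> 'b::real_inner set) \<Rightarrow> 'a \<Rightarrow> 'b \<Rightarrow> 'b \<Rightarrow> 'a set" where
  "eps_coderiv \<epsilon> F xb yb v = {u. (u, - v) \<in> eps_normal \<epsilon> (xb, yb) (gph F)}"

end

theory Submission
  imports Defs
begin

(* An epsilon-normal (u, -v) to the intersection of the graphs at (xb, yb) is a linear
   inequality <xi, z> <= c valid on the intersection of convex cores E_i of the graphs.
   Such an inequality splits over two convex sets A, B with a common relative interior
   point z0: separate 0 from the convex set {(b - a, c - <xi, b> + t) | a : A, b : B, t > 0}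
   by a normal (eta, mu) lying in the span of that set. If mu = 0, then <eta, .> is maximal
   on A and minimal on B at the relative interior point z0, hence constant on A and on B,
   and (eta, 0) would be orthogonal to its own span; so mu > 0 and xi1 = eta / mu gives
   <xi1, a> + <xi - xi1, b> <= c on A x B, after which a supremum splits c.
   Induction on the number of sets, passage to closures and epsilon_i = c_i - <xi_i, z>
   give the decomposition; the converse inclusion just adds the defining inequalities. *)

lemma inner_eq_if_max_at_rel_interior:
  fixes A :: "'a::euclidean_space set"
  assumes "convex A" "z0 \<in> rel_interior A" "\<forall>x\<in>A. inner \<eta> x \<le> inner \<eta> z0" "a \<in> A"
  shows "inner \<eta> a = inner \<eta> z0"
proof -
  obtain e where e: "e > 1" "(1 - e) *\<^sub>R a + e *\<^sub>R z0 \<in> A"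
    using convex_rel_interior_if2[OF assms(1,2)] hull_inc[OF assms(4)] by blast
  then have "(1 - e) * inner \<eta> a + e * inner \<eta> z0 \<le> inner \<eta> z0"
    using assms(3) by (metis inner_add_right inner_scaleR_right)
  then have "(e - 1) * (inner \<eta> z0 - inner \<eta> a) \<le> 0"
    by (simp add: algebra_simps)
  then have "inner \<eta> z0 \<le> inner \<eta> a"
    using \<open>e > 1\<close> by (simp add: mult_le_0_iff)
  then show ?thesis
    using assms(3,4) by (simp add: order_antisym)
qed

lemma split_bound_of_sum_bound:
  fixes f g :: "'a \<Rightarrow> real"
  assumes "A \<noteq> {}" "B \<noteq> {}" "\<And>a b. a \<in> A \<Longrightarrow> b \<in> B \<Longrightarrow> f a + g b \<le> c"
  obtains c1 where "\<forall>a\<in>A. f a \<le> c1" "\<forall>b\<in>B. g b \<le> c - c1"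
proof
  obtain b0 where "b0 \<in> B" using assms(2) by blast
  have bdd: "bdd_above (f ` A)"
    using assms(3)[OF _ \<open>b0 \<in> B\<close>] by (intro bdd_aboveI2[of _ _ "c - g b0"]) force
  show "\<forall>a\<in>A. f a \<le> Sup (f ` A)"
    using cSup_upper[OF _ bdd] by blast
  show "\<forall>b\<in>B. g b \<le> c - Sup (f ` A)"
  proof
    fix b assume "b \<in> B"
    have "Sup (f ` A) \<le> c - g b"
      using assms(1) assms(3)[OF _ \<open>b \<in> B\<close>] by (intro cSup_least) (auto simp: algebra_simps)
    then show "g b \<le> c - Sup (f ` A)" by simp
  qed
qed

lemma convex_shifted_differences:
  fixes A B :: "'a::euclidean_space set"
  assumes "convex A" "convex B"
  shows "convex {(b - a, c - inner \<xi> b + t) | a b t. a \<in> A \<and> b \<in> B \<and> t > 0}"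
proof -
  let ?f = "\<lambda>(a, b, t). (b - a, t - inner \<xi> b)"
  have "linear ?f"
    by (intro linearI) (auto simp: algebra_simps inner_add_right)
  then have "convex ((+) (0, c) ` ?f ` (A \<times> B \<times> {0<..}))"
    using assms by (intro convex_translation convex_linear_image convex_Times convex_real_interval)
  moreover have "(+) (0, c) ` ?f ` (A \<times> B \<times> {0<..}) =
      {(b - a, c - inner \<xi> b + t) | a b t. a \<in> A \<and> b \<in> B \<and> t > 0}"
    by (auto simp: image_iff) force+
  ultimately show ?thesis by simp
qed

lemma halfspace_Int_separation:
  fixes A B :: "'a::euclidean_space set"
  assumes cA: "convex A" and cB: "convex B"
    and zA: "z0 \<in> rel_interior A" and zB: "z0 \<in> rel_interior B"
    and H: "\<forall>z\<in>A \<inter> B. inner \<xi> z \<le> c"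
  obtains \<eta> \<mu> where "\<mu> > 0"
    "\<And>a b t. a \<in> A \<Longrightarrow> b \<in> B \<Longrightarrow> t > 0 \<Longrightarrow> 0 \<le> inner \<eta> (b - a) + \<mu> * (c - inner \<xi> b + t)"
proof -
  have z0A: "z0 \<in> A" and z0B: "z0 \<in> B"
    using zA zB rel_interior_subset by auto
  define S where "S = {(b - a, c - inner \<xi> b + t) | a b t. a \<in> A \<and> b \<in> B \<and> t > 0}"
  have mem_S: "(b - a, c - inner \<xi> b + t) \<in> S" if "a \<in> A" "b \<in> B" "t > 0" for a b t
    unfolding S_def using that by blast
  have "0 \<notin> S"
  proof
    assume "0 \<in> S"
    then obtain a b t where "0 = (b - a, c - inner \<xi> b + t)" "a \<in> A" "b \<in> B" "t > 0"
      unfolding S_def by blast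
    then have "a \<in> A \<inter> B" "inner \<xi> a = c + t"
      by (auto simp: zero_prod_def)
    then show False
      using H \<open>t > 0\<close> by (metis add_le_same_cancel1 linorder_not_le)
  qed
  moreover have "S \<noteq> {}"
    using mem_S[OF z0A z0B zero_less_one] by blast
  ultimately obtain w where w: "w \<in> span S" "w \<noteq> 0" "\<And>x. x \<in> S \<Longrightarrow> 0 \<le> inner w x"
    using separating_hyperplane_set_0_inspan convex_shifted_differences[OF cA cB, where c = c and \<xi> = \<xi>]
    unfolding S_def[symmetric] by blast
  obtain \<eta> \<mu> where w_eq: "w = (\<eta>, \<mu>)" by fastforce
  have key: "0 \<le> inner \<eta> (b - a) + \<mu> * (c - inner \<xi> b + t)" if "a \<in> A" "b \<in> B" "t > 0" for a b t
    using w(3)[OF mem_S[OF that]] by (simp add: w_eq)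
  have "\<mu> \<ge> 0"
  proof (rule ccontr)
    assume "\<not> \<mu> \<ge> 0"
    moreover have "0 \<le> \<mu> * (c - inner \<xi> z0 + (\<bar>c - inner \<xi> z0\<bar> + 1))"
      using key[OF z0A z0B, of "\<bar>c - inner \<xi> z0\<bar> + 1"] by simp
    ultimately show False
      by (simp add: zero_le_mult_iff)
  qed
  moreover have "\<mu> \<noteq> 0"
  proof
    assume "\<mu> = 0"
    then have sep: "inner \<eta> a \<le> inner \<eta> b" if "a \<in> A" "b \<in> B" for a b
      using key[OF that, of 1] by (simp add: inner_diff_right)
    have "inner \<eta> a = inner \<eta> z0" if "a \<in> A" for a
      using inner_eq_if_max_at_rel_interior[OF cA zA _ that] sep[OF _ z0B] by blast
    moreover have "inner (- \<eta>) b = inner (- \<eta>) z0" if "b \<in> B" for b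
      using inner_eq_if_max_at_rel_interior[OF cB zB _ that, of "- \<eta>"] sep[OF z0A] by simp
    ultimately have "orthogonal w x" if "x \<in> S" for x
      using that \<open>\<mu> = 0\<close> unfolding S_def w_eq orthogonal_def
      by (auto simp: inner_diff_right)
    then have "orthogonal w w"
      using orthogonal_to_span w(1) by blast
    then show False
      using w(2) by (simp add: orthogonal_def)
  qed
  ultimately show ?thesis
    by (intro that[OF _ key]) auto
qed

lemma halfspace_Int_split:
  fixes A B :: "'a::euclidean_space set"
  assumes "convex A" "convex B" "z0 \<in> rel_interior A" "z0 \<in> rel_interior B"
    and "\<forall>z\<in>A \<inter> B. inner \<xi> z \<le> c"
  obtains \<xi>1 c1 where "\<forall>a\<in>A. inner \<xi>1 a \<le> c1" "\<forall>b\<in>B. inner (\<xi> - \<xi>1) b \<le> c - c1"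
proof -
  obtain \<mu> \<eta> where "\<mu> > 0" and key:
    "\<And>a b t. a \<in> A \<Longrightarrow> b \<in> B \<Longrightarrow> t > 0 \<Longrightarrow> 0 \<le> inner \<eta> (b - a) + \<mu> * (c - inner \<xi> b + t)"
    by (rule halfspace_Int_separation[OF assms]) blast
  define \<xi>1 where "\<xi>1 = (1 / \<mu>) *\<^sub>R \<eta>"
  have decoupled: "inner \<xi>1 a + inner (\<xi> - \<xi>1) b \<le> c" if "a \<in> A" "b \<in> B" for a b
  proof (rule field_le_epsilon)
    fix t :: real
    assume "t > 0"
    have "0 \<le> (inner \<eta> (b - a) + \<mu> * (c - inner \<xi> b + t)) / \<mu>"
      using key[OF that \<open>t > 0\<close>] \<open>\<mu> > 0\<close> by (simp add: divide_nonneg_pos)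
    also have "\<dots> = c + t - (inner \<xi>1 a + inner (\<xi> - \<xi>1) b)"
      using \<open>\<mu> > 0\<close>
      by (simp add: \<xi>1_def inner_diff_left inner_diff_right field_simps)
    finally show "inner \<xi>1 a + inner (\<xi> - \<xi>1) b \<le> c + t"
      by simp
  qed
  have "A \<noteq> {}" "B \<noteq> {}"
    using assms(3,4) rel_interior_subset by auto
  then obtain c1 where "\<forall>a\<in>A. inner \<xi>1 a \<le> c1" "\<forall>b\<in>B. inner (\<xi> - \<xi>1) b \<le> c - c1"
    using decoupled by (rule split_bound_of_sum_bound)
  then show ?thesis
    by (rule that)
qed

lemma halfspace_INT_split:
  fixes E :: "'i \<Rightarrow> 'a::euclidean_space set"
  assumes "finite I" "I \<noteq> {}" "\<forall>i\<in>I. convex (E i)" "z0 \<in> (\<Inter>i\<in>I. rel_interior (E i))"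
    and "\<forall>z\<in>(\<Inter>i\<in>I. E i). inner \<xi> z \<le> c"
  shows "\<exists>\<xi>s cs. (\<Sum>i\<in>I. \<xi>s i) = \<xi> \<and> (\<Sum>i\<in>I. cs i) = c \<and> (\<forall>i\<in>I. \<forall>z\<in>E i. inner (\<xi>s i) z \<le> cs i)"
  using assms
proof (induction I arbitrary: \<xi> c rule: finite_ne_induct)
  case (singleton i)
  then show ?case
    by (intro exI[of _ "\<lambda>_. \<xi>"] exI[of _ "\<lambda>_. c"]) simp
next
  case (insert j I)
  define A where "A = (\<Inter>i\<in>I. E i)"
  have cA: "convex A"
    unfolding A_def using "insert.prems"(1) by (intro convex_INT) auto
  have zA: "z0 \<in> rel_interior A"
    unfolding A_def using "insert.prems"(1,2) "insert.hyps"(1,2)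
    by (subst convex_rel_interior_finite_Inter) auto
  have "\<forall>z\<in>A \<inter> E j. inner \<xi> z \<le> c"
    using "insert.prems"(3) unfolding A_def by auto
  then obtain \<xi>1 c1 where split: "\<forall>a\<in>A. inner \<xi>1 a \<le> c1" "\<forall>b\<in>E j. inner (\<xi> - \<xi>1) b \<le> c - c1"
    using halfspace_Int_split[OF cA _ zA] "insert.prems"(1,2) by blast
  obtain \<xi>s cs where
    "(\<Sum>i\<in>I. \<xi>s i) = \<xi>1" "(\<Sum>i\<in>I. cs i) = c1" "\<forall>i\<in>I. \<forall>z\<in>E i. inner (\<xi>s i) z \<le> cs i"
    using "insert.IH"[of \<xi>1 c1] "insert.prems"(1,2) split(1) unfolding A_def by auto
  then show ?case
    using split(2) "insert.hyps"(1,3)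
    by (intro exI[of _ "\<xi>s(j := \<xi> - \<xi>1)"] exI[of _ "cs(j := c - c1)"]) (auto intro!: sum.cong)
qed

lemma rel_interior_subset_of_between_closure:
  fixes D E :: "'a::euclidean_space set"
  assumes "convex E" "E \<subseteq> D" "D \<subseteq> closure E"
  shows "rel_interior D \<subseteq> rel_interior E"
proof -
  have "affine hull D = affine hull (closure E)"
    using hull_mono[OF assms(2), of affine] hull_mono[OF assms(3), of affine] by auto
  then have "rel_interior D \<subseteq> rel_interior (closure E)"
    using assms(3) by (rule subset_rel_interior[rotated])
  then show ?thesis
    using convex_rel_interior_closure[OF assms(1)] by simp
qed

lemma halfspace_INT_split_nearly_convex:
  fixes \<Omega> :: "'i \<Rightarrow> 'a::euclidean_space set"
  assumes "finite I" "I \<noteq> {}" "\<forall>i\<in>I. nearly_convex (\<Omega> i)"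
    and "(\<Inter>i\<in>I. rel_interior (\<Omega> i)) \<noteq> {}"
    and "\<forall>z\<in>(\<Inter>i\<in>I. \<Omega> i). inner \<xi> z \<le> c"
  shows "\<exists>\<xi>s cs. (\<Sum>i\<in>I. \<xi>s i) = \<xi> \<and> (\<Sum>i\<in>I. cs i) = c \<and> (\<forall>i\<in>I. \<forall>z\<in>\<Omega> i. inner (\<xi>s i) z \<le> cs i)"
proof -
  obtain E where E: "\<And>i. i \<in> I \<Longrightarrow> convex (E i) \<and> E i \<subseteq> \<Omega> i \<and> \<Omega> i \<subseteq> closure (E i)"
    using assms(3) unfolding nearly_convex_def by (metis (mono_tags))
  have "rel_interior (\<Omega> i) \<subseteq> rel_interior (E i)" if "i \<in> I" for i
    using E[OF that] by (intro rel_interior_subset_of_between_closure) auto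
  then obtain z0 where "z0 \<in> (\<Inter>i\<in>I. rel_interior (E i))"
    using assms(4) by blast
  moreover have "\<forall>z\<in>(\<Inter>i\<in>I. E i). inner \<xi> z \<le> c"
    using assms(5) E by blast
  ultimately obtain \<xi>s cs where sums: "(\<Sum>i\<in>I. \<xi>s i) = \<xi>" "(\<Sum>i\<in>I. cs i) = c"
    and bound: "\<forall>i\<in>I. \<forall>z\<in>E i. inner (\<xi>s i) z \<le> cs i"
    using halfspace_INT_split[OF assms(1,2), of E] E by blast
  have "\<forall>z\<in>\<Omega> i. inner (\<xi>s i) z \<le> cs i" if "i \<in> I" for i
  proof -
    have "closure (E i) \<subseteq> {z. inner (\<xi>s i) z \<le> cs i}"
      using bound that by (intro closure_minimal closed_halfspace_le) auto
    then show ?thesis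
      using E[OF that] by blast
  qed
  then show ?thesis
    using sums by blast
qed

lemma eps_normal_INT_decompose:
  fixes \<Omega> :: "'i \<Rightarrow> 'a::euclidean_space set"
  assumes "finite I" "I \<noteq> {}" "\<forall>i\<in>I. nearly_convex (\<Omega> i)"
    and "(\<Inter>i\<in>I. rel_interior (\<Omega> i)) \<noteq> {}"
    and "zb \<in> (\<Inter>i\<in>I. \<Omega> i)" "\<xi> \<in> eps_normal \<epsilon> zb (\<Inter>i\<in>I. \<Omega> i)"
  obtains \<xi>s es where "(\<Sum>i\<in>I. \<xi>s i) = \<xi>" "(\<Sum>i\<in>I. es i) = \<epsilon>"
    "\<forall>i\<in>I. es i \<ge> 0 \<and> \<xi>s i \<in> eps_normal (es i) zb (\<Omega> i)"
proof -
  have "\<forall>z\<in>(\<Inter>i\<in>I. \<Omega> i). inner \<xi> z \<le> \<epsilon> + inner \<xi> zb"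
    using assms(6) by (auto simp: eps_normal_def inner_diff_right algebra_simps)
  then obtain \<xi>s cs where sums: "(\<Sum>i\<in>I. \<xi>s i) = \<xi>" "(\<Sum>i\<in>I. cs i) = \<epsilon> + inner \<xi> zb"
    and bound: "\<forall>i\<in>I. \<forall>z\<in>\<Omega> i. inner (\<xi>s i) z \<le> cs i"
    using halfspace_INT_split_nearly_convex[OF assms(1-4)] by blast
  define es where "es i = cs i - inner (\<xi>s i) zb" for i
  have "(\<Sum>i\<in>I. es i) = \<epsilon>"
    using sums by (simp add: es_def sum_subtractf inner_sum_left[symmetric])
  moreover have "\<forall>i\<in>I. es i \<ge> 0 \<and> \<xi>s i \<in> eps_normal (es i) zb (\<Omega> i)"
    using bound assms(5) by (auto simp: es_def eps_normal_def inner_diff_right)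
  ultimately show ?thesis
    using that sums(1) by blast
qed

lemma eps_normal_sum_mem_INT:
  fixes \<Omega> :: "'i \<Rightarrow> 'a::real_inner set"
  assumes "\<forall>i\<in>I. \<xi>s i \<in> eps_normal (es i) zb (\<Omega> i)"
  shows "(\<Sum>i\<in>I. \<xi>s i) \<in> eps_normal (\<Sum>i\<in>I. es i) zb (\<Inter>i\<in>I. \<Omega> i)"
  unfolding eps_normal_def
proof (intro CollectI ballI)
  fix z
  assume "z \<in> (\<Inter>i\<in>I. \<Omega> i)"
  then have "inner (\<xi>s i) (z - zb) \<le> es i" if "i \<in> I" for i
    using assms that by (auto simp: eps_normal_def)
  then show "inner (\<Sum>i\<in>I. \<xi>s i) (z - zb) \<le> (\<Sum>i\<in>I. es i)"
    unfolding inner_sum_left by (rule sum_mono)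
qed

lemma gph_INT: "gph (\<lambda>x. \<Inter>i\<in>I. F i x) = (\<Inter>i\<in>I. gph (F i))"
  by (auto simp: gph_def)

lemma ri_eq_rel_interior: "ri D = rel_interior D"
  unfolding ri_def by (simp add: set_eq_iff mem_rel_interior_ball)

lemma eps_coderiv_INT_sum_mem:
  fixes F :: "'i \<Rightarrow> 'a::real_inner \<Rightarrow> 'b::real_inner set"
  assumes "\<forall>i\<in>I. u i \<in> eps_coderiv (e i) (F i) xb yb (vs i)"
  shows "(\<Sum>i\<in>I. u i) \<in> eps_coderiv (\<Sum>i\<in>I. e i) (\<lambda>x. \<Inter>i\<in>I. F i x) xb yb (\<Sum>i\<in>I. vs i)"
proof -
  have "(\<Sum>i\<in>I. (u i, - vs i)) \<in> eps_normal (\<Sum>i\<in>I. e i) (xb, yb) (\<Inter>i\<in>I. gph (F i))"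
    using assms unfolding eps_coderiv_def by (intro eps_normal_sum_mem_INT) simp
  moreover have "(\<Sum>i\<in>I. (u i, - vs i)) = (\<Sum>i\<in>I. u i, - (\<Sum>i\<in>I. vs i))"
    by (simp add: prod_eq_iff fst_sum snd_sum sum_negf)
  ultimately show ?thesis
    by (simp add: eps_coderiv_def gph_INT)
qed

lemma eps_coderiv_INT_decompose:
  fixes F :: "'i \<Rightarrow> 'a::euclidean_space \<Rightarrow> 'b::euclidean_space set"
  assumes "finite I" "I \<noteq> {}" "\<forall>i\<in>I. nearly_convex_map (F i)"
    and "(\<Inter>i\<in>I. ri (gph (F i))) \<noteq> {}"
    and "(xb, yb) \<in> gph (\<lambda>x. \<Inter>i\<in>I. F i x)"
    and "u \<in> eps_coderiv \<epsilon> (\<lambda>x. \<Inter>i\<in>I. F i x) xb yb v"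
  obtains e vs us where "\<forall>i\<in>I. e i \<ge> 0" "(\<Sum>i\<in>I. e i) = \<epsilon>" "(\<Sum>i\<in>I. vs i) = v"
    "(\<Sum>i\<in>I. us i) = u" "\<forall>i\<in>I. us i \<in> eps_coderiv (e i) (F i) xb yb (vs i)"
proof -
  obtain \<xi>s e where sums: "(\<Sum>i\<in>I. \<xi>s i) = (u, - v)" "(\<Sum>i\<in>I. e i) = \<epsilon>"
    and normal: "\<forall>i\<in>I. e i \<ge> 0 \<and> \<xi>s i \<in> eps_normal (e i) (xb, yb) (gph (F i))"
    using eps_normal_INT_decompose[OF assms(1,2), of "\<lambda>i. gph (F i)" "(xb, yb)" "(u, - v)" \<epsilon>]
      assms(3-6)
    by (auto simp: nearly_convex_map_def ri_eq_rel_interior gph_INT eps_coderiv_def)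
  have "(\<Sum>i\<in>I. - snd (\<xi>s i)) = v" "(\<Sum>i\<in>I. fst (\<xi>s i)) = u"
    using arg_cong[OF sums(1), of snd] arg_cong[OF sums(1), of fst]
    by (simp_all add: fst_sum snd_sum sum_negf)
  moreover have "\<forall>i\<in>I. fst (\<xi>s i) \<in> eps_coderiv (e i) (F i) xb yb (- snd (\<xi>s i))"
    using normal by (simp add: eps_coderiv_def)
  ultimately show ?thesis
    using that normal sums(2) by blast
qed

lemma eps_coderiv_INT_eq:
  fixes F :: "'i \<Rightarrow> 'a::euclidean_space \<Rightarrow> 'b::euclidean_space set"
  assumes "finite I" "I \<noteq> {}" "\<forall>i\<in>I. nearly_convex_map (F i)"
    and "(\<Inter>i\<in>I. ri (gph (F i))) \<noteq> {}"
    and "(xb, yb) \<in> gph (\<lambda>x. \<Inter>i\<in>I. F i x)"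
  shows "eps_coderiv \<epsilon> (\<lambda>x. \<Inter>i\<in>I. F i x) xb yb v =
    (\<Union>e \<in> {e. (\<forall>i\<in>I. e i \<ge> 0) \<and> (\<Sum>i\<in>I. e i) = \<epsilon>}.
       \<Union>vs \<in> {vs. (\<Sum>i\<in>I. vs i) = v}.
         {(\<Sum>i\<in>I. u i) | u. \<forall>i\<in>I. u i \<in> eps_coderiv (e i) (F i) xb yb (vs i)})"
    (is "?lhs = ?rhs")
proof (intro set_eqI iffI)
  fix u
  assume "u \<in> ?lhs"
  then obtain e vs us where "\<forall>i\<in>I. e i \<ge> 0" "(\<Sum>i\<in>I. e i) = \<epsilon>"
    "(\<Sum>i\<in>I. vs i) = v" "(\<Sum>i\<in>I. us i) = u"
    "\<forall>i\<in>I. us i \<in> eps_coderiv (e i) (F i) xb yb (vs i)"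
    by (rule eps_coderiv_INT_decompose[OF assms])
  then show "u \<in> ?rhs"
    by blast
next
  fix w
  assume "w \<in> ?rhs"
  then obtain e vs us where "(\<Sum>i\<in>I. e i) = \<epsilon>" "(\<Sum>i\<in>I. vs i) = v" "w = (\<Sum>i\<in>I. us i)"
    "\<forall>i\<in>I. us i \<in> eps_coderiv (e i) (F i) xb yb (vs i)"
    by blast
  then show "w \<in> ?lhs"
    using eps_coderiv_INT_sum_mem by blast
qed

theorem mainTheorem7:
  fixes F :: "nat \<Rightarrow> real ^ 'n \<Rightarrow> (real ^ 'm) set"
    and p :: nat and \<epsilon> :: real
    and xb :: "real ^ 'n" and yb :: "real ^ 'm" and v :: "real ^ 'm"
  assumes "p \<ge> 1"
    and "\<forall>i\<in>{1..p}. nearly_convex_map (F i)"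
    and "(\<Inter>i\<in>{1..p}. ri (gph (F i))) \<noteq> {}"
    and "\<epsilon> \<ge> 0"
    and "(xb, yb) \<in> gph (\<lambda>x. \<Inter>i\<in>{1..p}. F i x)"
  shows "eps_coderiv \<epsilon> (\<lambda>x. \<Inter>i\<in>{1..p}. F i x) xb yb v =
    (\<Union>e \<in> {e :: nat \<Rightarrow> real. (\<forall>i\<in>{1..p}. e i \<ge> 0) \<and> (\<Sum>i\<in>{1..p}. e i) = \<epsilon>}.
       \<Union>vs \<in> {vs :: nat \<Rightarrow> real ^ 'm. (\<Sum>i\<in>{1..p}. vs i) = v}.
         {(\<Sum>i\<in>{1..p}. u i) | u. \<forall>i\<in>{1..p}. u i \<in> eps_coderiv (e i) (F i) xb yb (vs i)})"
  using eps_coderiv_INT_eq[of "{1..p}" F xb yb \<epsilon> v] assms(1,2,3,5) by simp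

end
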